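(* Assume $n\ge 2$ and $\chi\neq\{0\}$. The reshuffling property and the strongly aggregate contributions property are independent: there exists a risk-sharing rule on $\chi^n$ that satisfies the reshuffling property but does not have strongly aggregate contributions, and there exists a risk-sharing rule on $\chi^n$ that has strongly aggregate contributions but does not satisfy the reshuffling property.
   Context: Fix a probability space $(\Omega,\mathcal{F},\mathbb{P})$ and an integer $n$. Let $\chi$ be a convex cone of non-negative random variables on this space (closed under addition and under multiplication by positive scalars) with $0\in\chi$. Equalities between random variables are understood almost surely. A pool is a vector $\boldsymbol{X}=(X_1,\ldots,X_n)\in\chi^n$, with aggregate loss $S_{\boldsymbol{X}}=\sum_{i=1}^n X_i$. A risk-sharing (RS) rule is a mapping $\boldsymbol{C}$ assigning to every pool $\boldsymbol{X}\in\chi^n$ a vector $\boldsymbol{C}[\boldsymbol{X}]=(C_1[\boldsymbol{X}],\ldots,C_n[\boldsymbol{X}])$ of real-valued random variables satisfying $\sum_{i=1}^n C_i[\boldsymbol{X}]=S_{\boldsymbol{X}}$. For a permutation $\pi$ of $\{1,\ldots,n\}$, $\boldsymbol{X}^\pi=(X_{\pi(1)},\ldots,X_{\pi(n)})$. Reshuffling property: $C_i[\boldsymbol{X}^\pi]=C_{\pi(i)}[\boldsymbol{X}]$ for all pools $\boldsymbol{X}$, permutations $\pi$ and indices $i$. Strongly aggregate contributions: there exists a single function $\mathbf{h}=(h_1,\ldots,h_n):\mathbb{R}\to\mathbb{R}^n$ (the same for all pools) such that $C_i[\boldsymbol{X}]=h_i(S_{\boldsymbol{X}})$ for every pool $\boldsymbol{X}$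 and every $i$. *)

theory Defs
  imports "HOL-Probability.Probability" "HOL-Combinatorics.Permutations"
begin

text \<open>Random variables on the probability space M are real-valued functions on
  the sample space; equalities between random variables are understood a.s.\<close>

definition rv_cone :: "'a measure \<Rightarrow> ('a \<Rightarrow> real) set \<Rightarrow> bool" where
  "rv_cone M K \<longleftrightarrow>
     K \<subseteq> borel_measurable M \<and>
     (\<forall>X\<in>K. \<forall>\<omega>\<in>space M. 0 \<le> X \<omega>) \<and>
     (\<lambda>_. 0) \<in> K \<and>
     (\<forall>X\<in>K. \<forall>Y\<in>K. (\<lambda>\<omega>. X \<omega> + Y \<omega>) \<in> K) \<and>
     (\<forall>X\<in>K. \<forall>c::real. c > 0 \<longrightarrow> (\<lambda>\<omega>. c * X \<omega>) \<in> K)"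

text \<open>Pools: vectors (X 0, ..., X (n-1)) in K^n, indexed by {..<n};
  entries at indices \<ge> n are fixed to 0 so that a pool is exactly an n-vector.\<close>
definition pools :: "('a \<Rightarrow> real) set \<Rightarrow> nat \<Rightarrow> (nat \<Rightarrow> 'a \<Rightarrow> real) set" where
  "pools K n = {X. (\<forall>i<n. X i \<in> K) \<and> (\<forall>i\<ge>n. X i = (\<lambda>_. 0))}"

definition agg :: "nat \<Rightarrow> (nat \<Rightarrow> 'a \<Rightarrow> real) \<Rightarrow> 'a \<Rightarrow> real" where
  "agg n X = (\<lambda>\<omega>. \<Sum>i<n. X i \<omega>)"

text \<open>A risk-sharing rule: to every pool it assigns n real random variables
  summing (a.s.) to the aggregate loss; being a map on (a.s.-classes of) random
  variables, a.s.-equal pools receive a.s.-equal contributions.\<close>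
definition RS_rule :: "'a measure \<Rightarrow> ('a \<Rightarrow> real) set \<Rightarrow> nat \<Rightarrow>
    ((nat \<Rightarrow> 'a \<Rightarrow> real) \<Rightarrow> nat \<Rightarrow> 'a \<Rightarrow> real) \<Rightarrow> bool" where
  "RS_rule M K n C \<longleftrightarrow>
     (\<forall>X\<in>pools K n. \<forall>i<n. C X i \<in> borel_measurable M) \<and>
     (\<forall>X\<in>pools K n. AE \<omega> in M. (\<Sum>i<n. C X i \<omega>) = agg n X \<omega>) \<and>
     (\<forall>X\<in>pools K n. \<forall>Y\<in>pools K n.
        (\<forall>i<n. AE \<omega> in M. X i \<omega> = Y i \<omega>) \<longrightarrow>
        (\<forall>i<n. AE \<omega> in M. C X i \<omega> = C Y i \<omega>))"

definition reshuffling :: "'a measure \<Rightarrow> ('a \<Rightarrow> real) set \<Rightarrow> nat \<Rightarrow>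
    ((nat \<Rightarrow> 'a \<Rightarrow> real) \<Rightarrow> nat \<Rightarrow> 'a \<Rightarrow> real) \<Rightarrow> bool" where
  "reshuffling M K n C \<longleftrightarrow>
     (\<forall>X\<in>pools K n. \<forall>\<pi>. \<pi> permutes {..<n} \<longrightarrow>
        (\<forall>i<n. AE \<omega> in M. C (X \<circ> \<pi>) i \<omega> = C X (\<pi> i) \<omega>))"

definition strongly_aggregate :: "'a measure \<Rightarrow> ('a \<Rightarrow> real) set \<Rightarrow> nat \<Rightarrow>
    ((nat \<Rightarrow> 'a \<Rightarrow> real) \<Rightarrow> nat \<Rightarrow> 'a \<Rightarrow> real) \<Rightarrow> bool" where
  "strongly_aggregate M K n C \<longleftrightarrow>
     (\<exists>h :: nat \<Rightarrow> real \<Rightarrow> real. \<forall>X\<in>pools K n. \<forall>i<n.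
        AE \<omega> in M. C X i \<omega> = h i (agg n X \<omega>))"

end

theory Submission
  imports Defs
begin

text \<open>Both counterexamples only use pools in which a single participant carries a
  loss Y that is not a.s. zero. The identity rule C[X] = X is trivially reshuffling,
  but Y placed at participant 0 or at participant 1 gives the same aggregate loss with
  different contributions of participant 0, so they cannot be functions of the aggregate.
  The rule that charges the whole aggregate to participant 0 is strongly aggregate, but
  moving Y from participant 0 to participant 1 leaves participant 1 with nothing, while
  reshuffling would charge them Y.\<close>

definition single_pool :: "nat \<Rightarrow> ('a \<Rightarrow> real) \<Rightarrow> nat \<Rightarrow> 'a \<Rightarrow> real" where
  "single_pool j Y = (\<lambda>i. if i = j then Y else (\<lambda>_. 0))"

definition first_bears_all :: "nat \<Rightarrow> (nat \<Rightarrow> 'a \<Rightarrow> real) \<Rightarrow> nat \<Rightarrow> 'a \<Rightarrow> real" where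
  "first_bears_all n X = (\<lambda>i. if i = 0 then agg n X else (\<lambda>_. 0))"

lemma single_pool_in_pools:
  assumes "Y \<in> K" and "(\<lambda>_. 0) \<in> K" and "j < n"
  shows "single_pool j Y \<in> pools K n"
  using assms unfolding single_pool_def pools_def by auto

lemma agg_single_pool:
  assumes "j < n"
  shows "agg n (single_pool j Y) = Y"
proof
  fix \<omega>
  have "(\<Sum>i<n. single_pool j Y i \<omega>) = (\<Sum>i<n. if i = j then Y \<omega> else 0)"
    by (rule sum.cong) (auto simp: single_pool_def)
  then show "agg n (single_pool j Y) \<omega> = Y \<omega>"
    using assms by (simp add: agg_def)
qed

lemma agg_measurable:
  assumes "K \<subseteq> borel_measurable M" and "X \<in> pools K n"
  shows "agg n X \<in> borel_measurable M"
  using assms unfolding agg_def pools_def by (intro borel_measurable_sum) auto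

lemma AE_agg_eq:
  assumes "\<forall>i<n. AE \<omega> in M. X i \<omega> = X' i \<omega>"
  shows "AE \<omega> in M. agg n X \<omega> = agg n X' \<omega>"
proof -
  have "AE \<omega> in M. \<forall>i\<in>{..<n}. X i \<omega> = X' i \<omega>"
    using assms by (subst AE_finite_all) auto
  then show ?thesis
    by eventually_elim (simp add: agg_def)
qed

lemma RS_rule_id:
  assumes "K \<subseteq> borel_measurable M"
  shows "RS_rule M K n (\<lambda>X. X)"
  using assms unfolding RS_rule_def pools_def agg_def by auto

lemma reshuffling_id: "reshuffling M K n (\<lambda>X. X)"
  unfolding reshuffling_def by simp

lemma not_strongly_aggregate_id:
  assumes "1 < n" and "Y \<in> K" and "(\<lambda>_. 0) \<in> K" and "\<not> (AE \<omega> in M. Y \<omega> = 0)"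
  shows "\<not> strongly_aggregate M K n (\<lambda>X. X)"
proof
  assume "strongly_aggregate M K n (\<lambda>X. X)"
  then obtain h where h: "\<forall>X\<in>pools K n. \<forall>i<n. AE \<omega> in M. X i \<omega> = h i (agg n X \<omega>)"
    unfolding strongly_aggregate_def by blast
  have at0: "AE \<omega> in M. Y \<omega> = h 0 (Y \<omega>)"
    using h single_pool_in_pools[OF assms(2,3), of 0 n] agg_single_pool[of 0 n Y] assms(1)
    by (force simp: single_pool_def)
  have at1: "AE \<omega> in M. 0 = h 0 (Y \<omega>)"
    using h single_pool_in_pools[OF assms(2,3), of 1 n] agg_single_pool[of 1 n Y] assms(1)
    by (force simp: single_pool_def)
  from at0 at1 have "AE \<omega> in M. Y \<omega> = 0"
    by eventually_elim simp
  with assms(4) show False ..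
qed

lemma RS_rule_first_bears_all:
  fixes M :: "'a measure"
  assumes "K \<subseteq> borel_measurable M" and "0 < n"
  shows "RS_rule M K n (first_bears_all n)"
  unfolding RS_rule_def
proof (intro conjI ballI allI impI)
  fix X i assume "X \<in> pools K n"
  then show "first_bears_all n X i \<in> borel_measurable M"
    using agg_measurable[OF assms(1)] by (simp add: first_bears_all_def)
next
  fix X :: "nat \<Rightarrow> 'a \<Rightarrow> real"
  have "(\<Sum>i<n. first_bears_all n X i \<omega>) = agg n X \<omega>" for \<omega>
  proof -
    have "(\<Sum>i<n. first_bears_all n X i \<omega>) = (\<Sum>i<n. if i = 0 then agg n X \<omega> else 0)"
      by (rule sum.cong) (auto simp: first_bears_all_def)
    then show ?thesis
      using assms(2) by simp
  qed
  then show "AE \<omega> in M. (\<Sum>i<n. first_bears_all n X i \<omega>) = agg n X \<omega>"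
    by simp
next
  fix X X' :: "nat \<Rightarrow> 'a \<Rightarrow> real" and i
  assume "\<forall>i<n. AE \<omega> in M. X i \<omega> = X' i \<omega>"
  then have "AE \<omega> in M. agg n X \<omega> = agg n X' \<omega>"
    by (rule AE_agg_eq)
  then show "AE \<omega> in M. first_bears_all n X i \<omega> = first_bears_all n X' i \<omega>"
    by (simp add: first_bears_all_def)
qed

lemma strongly_aggregate_first_bears_all: "strongly_aggregate M K n (first_bears_all n)"
  unfolding strongly_aggregate_def
  by (rule exI[of _ "\<lambda>i s. if i = 0 then s else 0"]) (simp add: first_bears_all_def)

lemma not_reshuffling_first_bears_all:
  assumes "1 < n" and "Y \<in> K" and "(\<lambda>_. 0) \<in> K" and "\<not> (AE \<omega> in M. Y \<omega> = 0)"
  shows "\<not> reshuffling M K n (first_bears_all n)"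
proof
  let ?\<pi> = "Transposition.transpose (0::nat) 1"
  assume "reshuffling M K n (first_bears_all n)"
  moreover have "?\<pi> permutes {..<n}"
    using assms(1) by (intro permutes_swap_id) auto
  ultimately have "AE \<omega> in M. first_bears_all n (single_pool 0 Y \<circ> ?\<pi>) 1 \<omega>
      = first_bears_all n (single_pool 0 Y) (?\<pi> 1) \<omega>"
    using single_pool_in_pools[OF assms(2,3), of 0 n] assms(1)
    unfolding reshuffling_def by blast
  then have "AE \<omega> in M. 0 = Y \<omega>"
    using agg_single_pool[of 0 n Y] assms(1) by (simp add: first_bears_all_def)
  then have "AE \<omega> in M. Y \<omega> = 0"
    by eventually_elim simp
  with assms(4) show False ..
qed

theorem proposition3:
  fixes M :: "'a measure" and K :: "('a \<Rightarrow> real) set" and n :: nat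
  assumes "prob_space M"
    and "rv_cone M K"
    and "n \<ge> 2"
    and "\<exists>X\<in>K. \<not> (AE \<omega> in M. X \<omega> = 0)"
  shows "(\<exists>C. RS_rule M K n C \<and> reshuffling M K n C \<and> \<not> strongly_aggregate M K n C)
       \<and> (\<exists>C. RS_rule M K n C \<and> strongly_aggregate M K n C \<and> \<not> reshuffling M K n C)"
proof -
  obtain Y where Y: "Y \<in> K" "\<not> (AE \<omega> in M. Y \<omega> = 0)"
    using assms(4) by blast
  have meas: "K \<subseteq> borel_measurable M" and zero: "(\<lambda>_. 0) \<in> K"
    using assms(2) unfolding rv_cone_def by auto
  have "1 < n"
    using assms(3) by simp
  have "RS_rule M K n (\<lambda>X. X) \<and> reshuffling M K n (\<lambda>X. X)
      \<and> \<not> strongly_aggregate M K n (\<lambda>X. X)"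
    using RS_rule_id[OF meas] reshuffling_id not_strongly_aggregate_id[OF \<open>1 < n\<close> Y(1) zero Y(2)]
    by blast
  moreover have "RS_rule M K n (first_bears_all n) \<and> strongly_aggregate M K n (first_bears_all n)
      \<and> \<not> reshuffling M K n (first_bears_all n)"
    using RS_rule_first_bears_all[OF meas] strongly_aggregate_first_bears_all
      not_reshuffling_first_bears_all[OF \<open>1 < n\<close> Y(1) zero Y(2)] \<open>1 < n\<close>
    by simp
  ultimately show ?thesis
    by blast
qed

end
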